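(* If $G$ is a graph of diameter $d$ and metric dimension $k$, then \[\frac{TC(\mathcal{H}(G))-1}{d}\leq k\leq TC(\mathcal{H}(G)).\]
   Context: A set $R$ of vertices of a graph $G$ is a resolving set if for each pair $u,v$ of distinct vertices there is $x\in R$ with $d(x,u)\neq d(x,v)$; the metric dimension is the smallest size of a resolving set. The distance hypergraph $\mathcal{H}(G)$ has vertex set $V(G)$ and, as hyperedges, all balls $B(v,r)=\{u: d(u,v)\leq r\}$ for all $v\in V(G)$ and all integers $r\geq 0$. A test cover of a hypergraph is a set of hyperedges such that every vertex lies in one of them and for every pair of distinct vertices one of them contains exactly one of the two; $TC(\cdot)$ denotes the minimum size of a test cover. *)

theory Defs
  imports Complex_Main
begin

definition graph :: "'a set \<Rightarrow> ('a \<Rightarrow> 'a \<Rightarrow> bool) \<Rightarrow> bool" where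
  "graph V E \<longleftrightarrow> finite V \<and> V \<noteq> {} \<and>
     (\<forall>u v. E u v \<longrightarrow> u \<in> V \<and> v \<in> V) \<and>
     (\<forall>u v. E u v \<longrightarrow> E v u) \<and> (\<forall>u. \<not> E u u)"

fun walk :: "('a \<Rightarrow> 'a \<Rightarrow> bool) \<Rightarrow> 'a list \<Rightarrow> bool" where
  "walk E [] = False"
| "walk E [x] = True"
| "walk E (x # y # xs) = (E x y \<and> walk E (y # xs))"

text \<open>A walk of length n from u to v (n edges).\<close>
definition walk_between :: "('a \<Rightarrow> 'a \<Rightarrow> bool) \<Rightarrow> 'a \<Rightarrow> 'a \<Rightarrow> nat \<Rightarrow> bool" where
  "walk_between E u v n \<longleftrightarrow> (\<exists>xs. walk E xs \<and> hd xs = u \<and> last xs = v \<and> length xs = Suc n)"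

definition connected_graph :: "'a set \<Rightarrow> ('a \<Rightarrow> 'a \<Rightarrow> bool) \<Rightarrow> bool" where
  "connected_graph V E \<longleftrightarrow> graph V E \<and> (\<forall>u\<in>V. \<forall>v\<in>V. \<exists>n. walk_between E u v n)"

definition gdist :: "('a \<Rightarrow> 'a \<Rightarrow> bool) \<Rightarrow> 'a \<Rightarrow> 'a \<Rightarrow> nat" where
  "gdist E u v = (LEAST n. walk_between E u v n)"

definition diameter :: "'a set \<Rightarrow> ('a \<Rightarrow> 'a \<Rightarrow> bool) \<Rightarrow> nat" where
  "diameter V E = Max {gdist E u v | u v. u \<in> V \<and> v \<in> V}"

definition resolving_set :: "'a set \<Rightarrow> ('a \<Rightarrow> 'a \<Rightarrow> bool) \<Rightarrow> 'a set \<Rightarrow> bool" where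
  "resolving_set V E R \<longleftrightarrow> R \<subseteq> V \<and>
     (\<forall>u\<in>V. \<forall>v\<in>V. u \<noteq> v \<longrightarrow> (\<exists>x\<in>R. gdist E x u \<noteq> gdist E x v))"

definition metric_dimension :: "'a set \<Rightarrow> ('a \<Rightarrow> 'a \<Rightarrow> bool) \<Rightarrow> nat" where
  "metric_dimension V E = (LEAST k. \<exists>R. resolving_set V E R \<and> card R = k)"

definition gball :: "'a set \<Rightarrow> ('a \<Rightarrow> 'a \<Rightarrow> bool) \<Rightarrow> 'a \<Rightarrow> nat \<Rightarrow> 'a set" where
  "gball V E v r = {u \<in> V. gdist E u v \<le> r}"

definition distance_hyperedges :: "'a set \<Rightarrow> ('a \<Rightarrow> 'a \<Rightarrow> bool) \<Rightarrow> 'a set set" where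
  "distance_hyperedges V E = {gball V E v r | v r. v \<in> V}"

definition test_cover :: "'a set \<Rightarrow> 'a set set \<Rightarrow> 'a set set \<Rightarrow> bool" where
  "test_cover V H T \<longleftrightarrow> T \<subseteq> H \<and> (\<forall>v\<in>V. \<exists>S\<in>T. v \<in> S) \<and>
     (\<forall>u\<in>V. \<forall>v\<in>V. u \<noteq> v \<longrightarrow> (\<exists>S\<in>T. (u \<in> S) \<noteq> (v \<in> S)))"

definition TC :: "'a set \<Rightarrow> 'a set set \<Rightarrow> nat" where
  "TC V H = (LEAST k. \<exists>T. test_cover V H T \<and> finite T \<and> card T = k)"

end

theory Submission
  imports Defs
begin

text \<open>A resolving set R yields a test cover of size at most |R| d + 1: the balls B(x, r) with
  x \<in> R and r < d, together with one ball of radius d (which is all of V). Indeed if x resolves u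
  and v, say d(x,u) < d(x,v) \<le> d, then B(x, d(x,u)) contains u but not v. Conversely, the centres
  of the balls of a test cover form a resolving set, since a ball around c separating u and v forces
  d(c,u) \<noteq> d(c,v).\<close>

lemma graph_symp: "graph V E \<Longrightarrow> symp E"
  unfolding graph_def symp_def by blast

lemma walk_snoc: "walk E xs \<Longrightarrow> E (last xs) x \<Longrightarrow> walk E (xs @ [x])"
  by (induction E xs rule: walk.induct) auto

lemma walk_rev:
  assumes "symp E"
  shows "walk E xs \<Longrightarrow> walk E (rev xs)"
proof (induction xs rule: induct_list012)
  case (3 x y xs)
  then show ?case using walk_snoc[of E "rev (y # xs)" x] sympD[OF assms] by simp
qed auto

lemma walk_between_sym:
  assumes "symp E" and "walk_between E u v n"
  shows "walk_between E v u n"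
proof -
  obtain xs where xs: "walk E xs" "hd xs = u" "last xs = v" "length xs = Suc n"
    using assms(2) unfolding walk_between_def by blast
  then have "xs \<noteq> []" by auto
  with xs walk_rev[OF assms(1)] show ?thesis
    unfolding walk_between_def by (intro exI[of _ "rev xs"]) (simp add: hd_rev last_rev)
qed

lemma gdist_commute:
  assumes "symp E"
  shows "gdist E u v = gdist E v u"
proof -
  have "walk_between E u v = walk_between E v u"
    using walk_between_sym[OF assms] by blast
  then show ?thesis unfolding gdist_def by simp
qed

lemma gdist_self [simp]: "gdist E u u = 0"
proof -
  have "walk_between E u u 0" unfolding walk_between_def by (intro exI[of _ "[u]"]) simp
  then show ?thesis unfolding gdist_def by (rule Least_eq_0)
qed

lemma gdist_eq_0_imp_eq:
  assumes "connected_graph V E" "u \<in> V" "v \<in> V" "gdist E u v = 0"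
  shows "u = v"
proof -
  obtain n where "walk_between E u v n" using assms unfolding connected_graph_def by blast
  then have "walk_between E u v (gdist E u v)" unfolding gdist_def by (rule LeastI)
  then obtain xs where "hd xs = u" "last xs = v" "length xs = 1"
    using assms(4) unfolding walk_between_def by auto
  then show ?thesis by (cases xs) auto
qed

lemma gdist_le_diameter:
  assumes "graph V E" "u \<in> V" "v \<in> V"
  shows "gdist E u v \<le> diameter V E"
proof -
  have "{gdist E u v | u v. u \<in> V \<and> v \<in> V} = (\<lambda>(u, v). gdist E u v) ` (V \<times> V)" by auto
  moreover have "finite V" using assms(1) unfolding graph_def by simp
  ultimately show ?thesis unfolding diameter_def using assms by (intro Max_ge) auto
qed

lemma gball_diameter:
  assumes "graph V E" "v \<in> V"
  shows "gball V E v (diameter V E) = V"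
  using gdist_le_diameter[OF assms(1) _ assms(2)] unfolding gball_def by auto

lemma gball_separates:
  assumes "symp E" "u \<in> V" "gdist E x u < gdist E x v"
  shows "u \<in> gball V E x (gdist E x u)" "v \<notin> gball V E x (gdist E x u)"
  using assms gdist_commute[OF assms(1), of x] unfolding gball_def by auto

lemma gball_separates_imp_gdist_neq:
  assumes "symp E" "u \<in> V" "v \<in> V"
    and "(u \<in> gball V E c r) \<noteq> (v \<in> gball V E c r)"
  shows "gdist E c u \<noteq> gdist E c v"
  using assms gdist_commute[OF assms(1), of c] unfolding gball_def by auto

lemma resolving_set_vertex_set:
  assumes "connected_graph V E"
  shows "resolving_set V E V"
  unfolding resolving_set_def
proof (intro conjI ballI impI)
  fix u v assume "u \<in> V" "v \<in> V" "u \<noteq> v"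
  then have "gdist E u u \<noteq> gdist E u v" using gdist_eq_0_imp_eq[OF assms] by force
  with \<open>u \<in> V\<close> show "\<exists>x\<in>V. gdist E x u \<noteq> gdist E x v" by blast
qed simp

lemma metric_dimension_attained:
  assumes "connected_graph V E"
  obtains R where "resolving_set V E R" "card R = metric_dimension V E"
  using LeastI[where P = "\<lambda>k. \<exists>R. resolving_set V E R \<and> card R = k"]
    resolving_set_vertex_set[OF assms] that
  unfolding metric_dimension_def by blast

lemma metric_dimension_le_card:
  "resolving_set V E R \<Longrightarrow> metric_dimension V E \<le> card R"
  unfolding metric_dimension_def by (rule Least_le) blast

lemma TC_le_card: "test_cover V H T \<Longrightarrow> finite T \<Longrightarrow> TC V H \<le> card T"
  unfolding TC_def by (rule Least_le) blast

lemma TC_attained: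
  assumes "test_cover V H T" "finite T"
  obtains T0 where "test_cover V H T0" "finite T0" "card T0 = TC V H"
  using LeastI[where P = "\<lambda>k. \<exists>T. test_cover V H T \<and> finite T \<and> card T = k"] assms that
  unfolding TC_def by blast

lemma test_cover_balls_around_resolving_set:
  assumes "graph V E" "resolving_set V E R" "v0 \<in> V"
  shows "test_cover V (distance_hyperedges V E)
           ((\<lambda>(x, r). gball V E x r) ` (R \<times> {..<diameter V E}) \<union> {gball V E v0 (diameter V E)})"
    (is "test_cover V _ ?T")
  unfolding test_cover_def
proof (intro conjI ballI impI)
  have sym: "symp E" using assms(1) by (rule graph_symp)
  have "R \<subseteq> V" using assms(2) unfolding resolving_set_def by simp
  then show "?T \<subseteq> distance_hyperedges V E"
    unfolding distance_hyperedges_def using assms(3) by auto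
  show "\<exists>S\<in>?T. v \<in> S" if "v \<in> V" for v
    using that gball_diameter[OF assms(1,3)] by auto
  have separated: "\<exists>S\<in>?T. (a \<in> S) \<noteq> (b \<in> S)"
    if "x \<in> R" "a \<in> V" "gdist E x a < gdist E x b" "gdist E x b \<le> diameter V E" for x a b
  proof
    show "gball V E x (gdist E x a) \<in> ?T"
      using that by (intro UnI1 image_eqI[where x = "(x, gdist E x a)"]) auto
    show "(a \<in> gball V E x (gdist E x a)) \<noteq> (b \<in> gball V E x (gdist E x a))"
      using gball_separates[OF sym that(2,3)] by blast
  qed
  show "\<exists>S\<in>?T. (u \<in> S) \<noteq> (v \<in> S)" if uv: "u \<in> V" "v \<in> V" "u \<noteq> v" for u v
  proof -
    obtain x where x: "x \<in> R" "gdist E x u \<noteq> gdist E x v"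
      using assms(2) uv unfolding resolving_set_def by blast
    with \<open>R \<subseteq> V\<close> have "gdist E x u \<le> diameter V E" "gdist E x v \<le> diameter V E"
      using gdist_le_diameter[OF assms(1)] uv by auto
    then show ?thesis
      using separated[of x u v] separated[of x v u] x uv by (metis linorder_neqE_nat)
  qed
qed

lemma TC_distance_hyperedges_le:
  assumes "graph V E" "resolving_set V E R"
  shows "TC V (distance_hyperedges V E) \<le> card R * diameter V E + 1"
proof -
  obtain v0 where "v0 \<in> V" using assms(1) unfolding graph_def by blast
  let ?balls = "(\<lambda>(x, r). gball V E x r) ` (R \<times> {..<diameter V E})"
  have "finite R"
    using assms finite_subset unfolding graph_def resolving_set_def by blast
  then have "TC V (distance_hyperedges V E) \<le> card (?balls \<union> {gball V E v0 (diameter V E)})"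
    using test_cover_balls_around_resolving_set[OF assms \<open>v0 \<in> V\<close>] by (intro TC_le_card) auto
  also have "\<dots> \<le> card ?balls + 1" by (rule order_trans[OF card_Un_le]) simp
  also have "\<dots> \<le> card (R \<times> {..<diameter V E}) + 1"
    using \<open>finite R\<close> by (intro add_right_mono card_image_le) simp
  finally show ?thesis by (simp add: card_cartesian_product)
qed

lemma resolving_set_centres:
  assumes "graph V E" "test_cover V (distance_hyperedges V E) T"
    and "\<And>S. S \<in> T \<Longrightarrow> centre S \<in> V \<and> S = gball V E (centre S) (radius S)"
  shows "resolving_set V E (centre ` T)"
  unfolding resolving_set_def
proof (intro conjI ballI impI)
  have sym: "symp E" using assms(1) by (rule graph_symp)
  show "centre ` T \<subseteq> V" using assms(3) by auto
  fix u v assume "u \<in> V" "v \<in> V" "u \<noteq> v"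
  then obtain S where "S \<in> T" "(u \<in> S) \<noteq> (v \<in> S)"
    using assms(2) unfolding test_cover_def by blast
  show "\<exists>x\<in>centre ` T. gdist E x u \<noteq> gdist E x v"
  proof
    show "centre S \<in> centre ` T" using \<open>S \<in> T\<close> by (rule imageI)
    have "S = gball V E (centre S) (radius S)" using assms(3)[OF \<open>S \<in> T\<close>] by simp
    with \<open>(u \<in> S) \<noteq> (v \<in> S)\<close>
    show "gdist E (centre S) u \<noteq> gdist E (centre S) v"
      by (intro gball_separates_imp_gdist_neq[OF sym \<open>u \<in> V\<close> \<open>v \<in> V\<close>,
          where r = "radius S"]) simp
  qed
qed

lemma metric_dimension_le_card_test_cover:
  assumes "graph V E" "test_cover V (distance_hyperedges V E) T" "finite T"
  shows "metric_dimension V E \<le> card T"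
proof -
  have "\<forall>S\<in>T. \<exists>c r. c \<in> V \<and> S = gball V E c r"
    using assms(2) unfolding test_cover_def distance_hyperedges_def by blast
  then obtain centre radius
    where "\<And>S. S \<in> T \<Longrightarrow> centre S \<in> V \<and> S = gball V E (centre S) (radius S)"
    by metis
  then have "metric_dimension V E \<le> card (centre ` T)"
    by (intro metric_dimension_le_card resolving_set_centres[OF assms(1,2)])
  also have "\<dots> \<le> card T" by (rule card_image_le[OF assms(3)])
  finally show ?thesis .
qed

lemma TC_le_metric_dimension_mult_diameter:
  assumes "connected_graph V E"
  shows "TC V (distance_hyperedges V E) \<le> metric_dimension V E * diameter V E + 1"
proof -
  obtain R where "resolving_set V E R" "card R = metric_dimension V E"
    using metric_dimension_attained[OF assms] .
  with assms show ?thesis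
    using TC_distance_hyperedges_le unfolding connected_graph_def by metis
qed

lemma metric_dimension_le_TC:
  assumes "connected_graph V E"
  shows "metric_dimension V E \<le> TC V (distance_hyperedges V E)"
proof -
  have graph: "graph V E" using assms unfolding connected_graph_def by simp
  then obtain v0 where "v0 \<in> V" unfolding graph_def by blast
  have "finite V" using graph unfolding graph_def by simp
  obtain T0 where "test_cover V (distance_hyperedges V E) T0" "finite T0"
    "card T0 = TC V (distance_hyperedges V E)"
    by (rule TC_attained[OF test_cover_balls_around_resolving_set[OF graph
          resolving_set_vertex_set[OF assms] \<open>v0 \<in> V\<close>]]) (simp_all add: \<open>finite V\<close>)
  then show ?thesis using metric_dimension_le_card_test_cover[OF graph] by metis
qed

theorem proposition3:
  fixes V :: "'a set" and E :: "'a \<Rightarrow> 'a \<Rightarrow> bool" and d k :: nat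
  assumes "connected_graph V E"
    and "diameter V E = d"
    and "metric_dimension V E = k"
  shows "(real (TC V (distance_hyperedges V E)) - 1) / real d \<le> real k
       \<and> k \<le> TC V (distance_hyperedges V E)"
proof
  have "real (TC V (distance_hyperedges V E)) \<le> real (k * d + 1)"
    using TC_le_metric_dimension_mult_diameter[OF assms(1)] assms(2,3) by (intro of_nat_mono) simp
  then have "real (TC V (distance_hyperedges V E)) - 1 \<le> real k * real d"
    by simp
  then show "(real (TC V (distance_hyperedges V E)) - 1) / real d \<le> real k"
    by (cases "d = 0") (simp_all add: divide_le_eq)
  show "k \<le> TC V (distance_hyperedges V E)"
    using metric_dimension_le_TC[OF assms(1)] assms(3) by simp
qed

end
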